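(* Let $m\ge1$ and $\beta\in\mathbb R$. For $0\le s\le m$ set $\varepsilon_j=-1$ for $1\le j\le s$ and $\varepsilon_j=+1$ for $s<j\le m$, and $$F_s(m)=\frac{2^{m^2-m}}{\pi^m\,s!\,(m-s)!}\int_{[0,\pi/2]^m}dp_1\cdots dp_m\prod_{1\le k<j\le m}\sin^2(\varepsilon_jp_j-\varepsilon_kp_k).$$ Then $$\sum_{s=0}^m e^{s\beta}F_s(m)=\det_m T(\beta),\qquad T_{kn}(\beta)=\delta_{kn}\frac{e^\beta+1}{2}+(1-\delta_{kn})(1-e^\beta)\frac{1-(-1)^{n-k}}{2i\pi(n-k)},\quad 1\le k,n\le m.$$
   Context: This is the homogeneous free-fermion ($\zeta=\pi/2$) case of the generating function $\mathcal Q_m(\beta)=\langle\psi_g|\exp(\beta\sum_{j=1}^m\frac12(1-\sigma^z_j))|\psi_g\rangle$ of the XX chain; the claim is the stated integral/determinant identity. *)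

theory Defs
  imports "HOL-Analysis.Analysis" "Jordan_Normal_Form.Determinant"
begin

text \<open>Signs: indices are 0-based, j in {0..<m}; eps s j = -1 for j < s, +1 otherwise.\<close>
definition eps :: "nat \<Rightarrow> nat \<Rightarrow> real" where
  "eps s j = (if j < s then -1 else 1)"

definition F :: "nat \<Rightarrow> nat \<Rightarrow> real" where
  "F m s = 2 powr (real (m^2) - real m) / (pi ^ m * fact s * fact (m - s)) *
     (\<integral>p. indicator (PiE {..<m} (\<lambda>_. {0..pi/2})) p *
        (\<Prod>j\<in>{..<m}. \<Prod>k\<in>{..<j}. (sin (eps s j * p j - eps s k * p k))^2)
      \<partial>(PiM {..<m} (\<lambda>_. lborel)))"

definition Tmat :: "nat \<Rightarrow> real \<Rightarrow> complex mat" where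
  "Tmat m \<beta> = Matrix.mat m m (\<lambda>(k, n).
     if k = n then complex_of_real ((exp \<beta> + 1) / 2)
     else complex_of_real ((1 - exp \<beta>) * (1 - (-1) powi (int n - int k)))
          / (2 * \<i> * pi * of_int (int n - int k)))"

end

theory Submission
  imports Defs
begin

(*
  Since sin^2 (a - b) = (e^{2ia} - e^{2ib}) (e^{-2ia} - e^{-2ib}) / 4, the integrand of F_s(m)
  is 4^{-m(m-1)/2} V(z) V(conj z), where V is the Vandermonde product in z_j = e^{2i eps_j p_j}.
  Expanding both factors by Leibniz turns the integral into a double sum over permutations
  sigma, tau of products of one-dimensional integrals of e^{2i eps_j (sigma_j - tau_j) p}, each
  equal to pi * wave_integral (eps_j (sigma_j - tau_j)).  Up to a permutation of the positions,
  the sign vector only matters through the number s of minus signs, so the binomially weighted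
  sum over s becomes a sum over all sign patterns, which factorises entrywise into the kernel
  b(d) = wave_integral d + e^beta wave_integral (-d).  Finally the double sum collapses, via
  tau = rho o sigma, to m! det [b(k - n)] = m! det T(beta).
*)

section \<open>Sums over pairs of permutations\<close>

definition perm_pair_sum :: "nat \<Rightarrow> (nat \<Rightarrow> nat \<Rightarrow> nat \<Rightarrow> 'a::comm_ring_1) \<Rightarrow> 'a" where
  "perm_pair_sum m w = (\<Sum>\<sigma>\<in>{p. p permutes {..<m}}. \<Sum>\<tau>\<in>{p. p permutes {..<m}}.
     of_int (sign \<sigma> * sign \<tau>) * (\<Prod>j<m. w j (\<sigma> j) (\<tau> j)))"

lemma perm_pair_sum_cong:
  assumes "\<And>j. j < m \<Longrightarrow> w j = w' j"
  shows "perm_pair_sum m w = perm_pair_sum m w'"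
  unfolding perm_pair_sum_def using assms by (intro sum.cong arg_cong2[where f = "(*)"] prod.cong) auto

lemma prod_mult_perm_pair_sum:
  "(\<Prod>j<m. c j) * perm_pair_sum m w = perm_pair_sum m (\<lambda>j a b. c j * w j a b)"
  unfolding perm_pair_sum_def by (simp add: sum_distrib_left prod.distrib mult_ac)

lemma sum_permutes_mult_sum_permutes:
  "(\<Sum>\<sigma>\<in>{p. p permutes {..<m}}. of_int (sign \<sigma>) * (\<Prod>j<m. u j (\<sigma> j))) *
   (\<Sum>\<tau>\<in>{p. p permutes {..<m}}. of_int (sign \<tau>) * (\<Prod>j<m. v j (\<tau> j)))
   = perm_pair_sum m (\<lambda>j a b. u j a * v j b :: 'a::comm_ring_1)"
  unfolding perm_pair_sum_def sum_product by (simp add: prod.distrib mult_ac)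

lemma perm_pair_sum_compose_permutes:
  assumes q: "q permutes {..<m}"
  shows "perm_pair_sum m (w \<circ> q) = perm_pair_sum m w"
proof -
  let ?P = "{p. p permutes {..<m}}"
  have "perm_pair_sum m (w \<circ> q) = (\<Sum>\<sigma>\<in>?P. \<Sum>\<tau>\<in>?P. of_int (sign (\<sigma> \<circ> q) * sign (\<tau> \<circ> q)) *
      (\<Prod>j<m. w (q j) (\<sigma> (q j)) (\<tau> (q j))))"
    unfolding perm_pair_sum_def
    by (subst sum_permutations_compose_right[OF q], rule sum.cong[OF refl],
        subst sum_permutations_compose_right[OF q], simp)
  also have "\<dots> = perm_pair_sum m w"
    unfolding perm_pair_sum_def
  proof (intro sum.cong refl)
    fix \<sigma> \<tau> assume "\<sigma> \<in> ?P" "\<tau> \<in> ?P"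
    then have "sign (\<sigma> \<circ> q) * sign (\<tau> \<circ> q) = sign \<sigma> * sign \<tau>"
      using q by (simp add: sign_compose permutes_imp_permutation[OF finite_lessThan] mult_ac)
    moreover have "(\<Prod>j<m. w (q j) (\<sigma> (q j)) (\<tau> (q j))) = (\<Prod>k<m. w k (\<sigma> k) (\<tau> k))"
      using prod.reindex_bij_betw[OF permutes_imp_bij[OF q]] .
    ultimately show "of_int (sign (\<sigma> \<circ> q) * sign (\<tau> \<circ> q)) * (\<Prod>j<m. w (q j) (\<sigma> (q j)) (\<tau> (q j)))
        = of_int (sign \<sigma> * sign \<tau>) * (\<Prod>k<m. w k (\<sigma> k) (\<tau> k))"
      by simp
  qed
  finally show ?thesis .
qed

text \<open>Substituting \<open>\<tau> = \<rho> \<circ> \<sigma>\<close> makes the summand independent of \<open>\<sigma>\<close>.\<close>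
lemma perm_pair_sum_const:
  "perm_pair_sum m (\<lambda>_. g) = fact m * Determinant.det (Matrix.mat m m (\<lambda>(a, b). g a b))"
proof -
  let ?P = "{p. p permutes {..<m}}"
  let ?D = "\<Sum>\<rho>\<in>?P. of_int (sign \<rho>) * (\<Prod>k<m. g k (\<rho> k))"
  have "(\<Sum>\<tau>\<in>?P. of_int (sign \<sigma> * sign \<tau>) * (\<Prod>j<m. g (\<sigma> j) (\<tau> j))) = ?D"
    if \<sigma>: "\<sigma> permutes {..<m}" for \<sigma>
  proof -
    have "(\<Sum>\<tau>\<in>?P. of_int (sign \<sigma> * sign \<tau>) * (\<Prod>j<m. g (\<sigma> j) (\<tau> j)))
      = (\<Sum>\<rho>\<in>?P. of_int (sign \<sigma> * sign (\<rho> \<circ> \<sigma>)) * (\<Prod>j<m. g (\<sigma> j) (\<rho> (\<sigma> j))))"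
      by (subst sum_permutations_compose_right[OF \<sigma>]) simp
    also have "\<dots> = ?D"
    proof (rule sum.cong[OF refl])
      fix \<rho> assume "\<rho> \<in> ?P"
      then have "sign \<sigma> * sign (\<rho> \<circ> \<sigma>) = sign \<rho>"
        using \<sigma> by (simp add: sign_compose permutes_imp_permutation[OF finite_lessThan] mult_ac)
      moreover have "(\<Prod>j<m. g (\<sigma> j) (\<rho> (\<sigma> j))) = (\<Prod>k<m. g k (\<rho> k))"
        using prod.reindex_bij_betw[OF permutes_imp_bij[OF \<sigma>]] .
      ultimately show "of_int (sign \<sigma> * sign (\<rho> \<circ> \<sigma>)) * (\<Prod>j<m. g (\<sigma> j) (\<rho> (\<sigma> j)))
          = of_int (sign \<rho>) * (\<Prod>k<m. g k (\<rho> k))"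
        by simp
    qed
    finally show ?thesis .
  qed
  then have "perm_pair_sum m (\<lambda>_. g) = of_nat (card ?P) * ?D"
    unfolding perm_pair_sum_def by simp
  also have "card ?P = fact m"
    by (simp add: card_permutations)
  also have "?D = Determinant.det (Matrix.mat m m (\<lambda>(a, b). g a b))"
    by (subst det_def'[where n = m]) (auto simp: atLeast0LessThan permutes_in_image intro!: sum.cong prod.cong)
  finally show ?thesis by simp
qed

lemma prod_add_subsets:
  fixes x y :: "'b \<Rightarrow> 'a::comm_semiring_1"
  assumes "finite A"
  shows "(\<Prod>j\<in>A. x j + c * y j) = (\<Sum>S\<in>Pow A. c ^ card S * (\<Prod>j\<in>A. if j \<in> S then y j else x j))"
proof -
  have "(\<Prod>j\<in>A. x j + c * y j) = (\<Sum>S\<in>Pow A. (\<Prod>j\<in>S. c * y j) * (\<Prod>j\<in>A - S. x j))"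
    using prod_add[OF assms, of "\<lambda>j. c * y j" x] by (simp add: add.commute)
  also have "\<dots> = (\<Sum>S\<in>Pow A. c ^ card S * (\<Prod>j\<in>A. if j \<in> S then y j else x j))"
  proof (rule sum.cong[OF refl])
    fix S assume "S \<in> Pow A"
    then have "A \<inter> {j. j \<in> S} = S" "A \<inter> - {j. j \<in> S} = A - S" by auto
    then show "(\<Prod>j\<in>S. c * y j) * (\<Prod>j\<in>A - S. x j) = c ^ card S * (\<Prod>j\<in>A. if j \<in> S then y j else x j)"
      using assms by (simp add: prod.If_cases prod.distrib mult_ac)
  qed
  finally show ?thesis .
qed

lemma perm_pair_sum_multilinear:
  "perm_pair_sum m (\<lambda>j a b. g j a b + c * f j a b)
   = (\<Sum>S\<in>Pow {..<m}. c ^ card S * perm_pair_sum m (\<lambda>j a b. if j \<in> S then f j a b else g j a b))"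
  unfolding perm_pair_sum_def prod_add_subsets[OF finite_lessThan]
  by (simp add: sum_distrib_left mult_ac sum.swap[where A = "Pow _"] if_distrib)

lemma permutes_subset_onto_initial_segment:
  assumes "S \<subseteq> {..<m}"
  obtains q where "q permutes {..<m}" "\<And>j. j < m \<Longrightarrow> j \<in> S \<longleftrightarrow> q j < card S"
proof -
  have fin: "finite S" and le: "card S \<le> m"
    using assms finite_subset card_mono[OF _ assms] by auto
  have cnt: "sum (count (mset_set {..<m})) X = card X" if "X \<subseteq> {..<m}" for X
    using that by (simp add: subset_iff)
  have "image_mset (\<lambda>j. j \<in> S) (mset_set {..<m}) = image_mset (\<lambda>j. j < card S) (mset_set {..<m})"
  proof (rule multiset_eqI)
    fix b :: bool
    have "(\<lambda>j. j \<in> S) -` {b} \<inter> {..<m} = (if b then S else {..<m} - S)"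
      using assms by (cases b) (auto simp: vimage_def)
    moreover have "(\<lambda>j. j < card S) -` {b} \<inter> {..<m} = (if b then {..<card S} else {card S..<m})"
      using le by (cases b) (auto simp: vimage_def)
    ultimately show "count (image_mset (\<lambda>j. j \<in> S) (mset_set {..<m})) b
        = count (image_mset (\<lambda>j. j < card S) (mset_set {..<m})) b"
      using assms fin le by (simp add: count_image_mset cnt card_Diff_subset)
  qed
  then obtain q where "q permutes {..<m}" "\<forall>j\<in>{..<m}. (j \<in> S) = (q j < card S)"
    by (rule image_mset_eq_implies_permutes[OF finite_lessThan])
  then show ?thesis using that by auto
qed

lemma perm_pair_sum_subset_pattern:
  assumes "S \<subseteq> {..<m}"
  shows "perm_pair_sum m (\<lambda>j a b. if j \<in> S then f a b else g a b)
       = perm_pair_sum m (\<lambda>j a b. if j < card S then f a b else g a b)"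
proof -
  obtain q where q: "q permutes {..<m}" "\<And>j. j < m \<Longrightarrow> j \<in> S \<longleftrightarrow> q j < card S"
    using permutes_subset_onto_initial_segment[OF assms] by blast
  have "perm_pair_sum m (\<lambda>j a b. if j \<in> S then f a b else g a b)
      = perm_pair_sum m ((\<lambda>j a b. if j < card S then f a b else g a b) \<circ> q)"
    by (rule perm_pair_sum_cong) (simp add: q(2))
  also have "\<dots> = perm_pair_sum m (\<lambda>j a b. if j < card S then f a b else g a b)"
    by (rule perm_pair_sum_compose_permutes[OF q(1)])
  finally show ?thesis .
qed

lemma sum_Pow_by_card:
  fixes f :: "'a set \<Rightarrow> 'b::comm_semiring_1"
  assumes "finite A" "\<And>S. S \<subseteq> A \<Longrightarrow> f S = g (card S)"
  shows "(\<Sum>S\<in>Pow A. f S) = (\<Sum>k=0..card A. of_nat (card A choose k) * g k)"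
proof -
  have "(\<Sum>S\<in>Pow A. f S) = (\<Sum>k=0..card A. \<Sum>S\<in>{S \<in> Pow A. card S = k}. f S)"
    by (rule sum.group[symmetric]) (use assms(1) in \<open>auto intro: card_mono\<close>)
  also have "\<dots> = (\<Sum>k=0..card A. of_nat (card A choose k) * g k)"
  proof (rule sum.cong[OF refl])
    fix k
    have "(\<Sum>S\<in>{S \<in> Pow A. card S = k}. f S) = (\<Sum>S\<in>{S. S \<subseteq> A \<and> card S = k}. g k)"
      using assms(2) by (intro sum.cong) auto
    then show "(\<Sum>S\<in>{S \<in> Pow A. card S = k}. f S) = of_nat (card A choose k) * g k"
      using assms(1) by (simp add: n_subsets)
  qed
  finally show ?thesis .
qed

section \<open>The Vandermonde determinant\<close>

definition vandermonde_mat :: "nat \<Rightarrow> (nat \<Rightarrow> 'a::comm_ring_1) \<Rightarrow> 'a mat" where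
  "vandermonde_mat n x = Matrix.mat n n (\<lambda>(i, j). x i ^ j)"

lemma vandermonde_mat_carrier [simp]: "vandermonde_mat n x \<in> carrier_mat n n"
  by (simp add: vandermonde_mat_def)

lemma det_vandermonde_mat_Suc:
  "Determinant.det (vandermonde_mat (Suc n) x)
   = (\<Prod>i<n. x (Suc i) - x 0) * Determinant.det (vandermonde_mat n (x \<circ> Suc))"
proof -
  \<comment> \<open>Right multiplication by \<open>U\<close> subtracts \<open>x 0\<close> times column \<open>j - 1\<close> from column \<open>j\<close>
    (simultaneously for all \<open>j > 0\<close>), which clears the first row apart from its leading 1.\<close>
  define U :: "'a mat" where
    "U = Matrix.mat (Suc n) (Suc n) (\<lambda>(i, j). if i = j then 1 else if Suc i = j then - x 0 else 0)"
  define W where "W = vandermonde_mat (Suc n) x * U"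
  have U: "U \<in> carrier_mat (Suc n) (Suc n)"
    by (simp add: U_def)
  have W: "W \<in> carrier_mat (Suc n) (Suc n)"
    unfolding W_def by (rule mult_carrier_mat[OF vandermonde_mat_carrier U])
  have "upper_triangular U"
    by (auto simp: U_def upper_triangular_def)
  moreover have "diag_mat U = map (\<lambda>_. 1) [0..<Suc n]"
    by (simp add: U_def diag_mat_def)
  ultimately have "Determinant.det U = 1"
    using det_upper_triangular[OF _ U] by (simp add: map_replicate_const)
  then have det_W: "Determinant.det W = Determinant.det (vandermonde_mat (Suc n) x)"
    unfolding W_def using det_mult[OF vandermonde_mat_carrier U] by simp
  have W_entry: "W $$ (i, j) = (if j = 0 then 1 else (x i - x 0) * x i ^ (j - 1))"
    if "i < Suc n" "j < Suc n" for i j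
  proof -
    have "W $$ (i, j) = (\<Sum>k<Suc n. (if k = j then x i ^ k else 0) + (if Suc k = j then - x 0 * x i ^ k else 0))"
      using that by (auto simp: W_def U_def vandermonde_mat_def scalar_prod_def atLeast0LessThan intro!: sum.cong)
    also have "\<dots> = x i ^ j + (if j = 0 then 0 else - x 0 * x i ^ (j - 1))"
      using that by (cases j) (simp_all add: sum.distrib)
    finally show ?thesis
      by (cases j) (simp_all add: algebra_simps)
  qed
  have "Determinant.det W = (\<Sum>j<Suc n. W $$ (0, j) * cofactor W 0 j)"
    by (rule laplace_expansion_row[OF W]) simp
  also have "\<dots> = Determinant.det (mat_delete W 0 0)"
    by (simp add: sum.lessThan_Suc_shift W_entry cofactor_def del: sum.lessThan_Suc)
  also have "mat_delete W 0 0 = mat\<^sub>r n n (\<lambda>i. (x (Suc i) - x 0) \<cdot>\<^sub>v row (vandermonde_mat n (x \<circ> Suc)) i)"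
    using W by (intro eq_matI) (auto simp: mat_delete_def W_entry vandermonde_mat_def)
  also have "Determinant.det \<dots> = (\<Prod>i\<in>{0..<n}. x (Suc i) - x 0) *
      Determinant.det (mat\<^sub>r n n (\<lambda>i. row (vandermonde_mat n (x \<circ> Suc)) i))"
    by (rule det_rows_mul) (auto simp: vandermonde_mat_def)
  also have "mat\<^sub>r n n (\<lambda>i. row (vandermonde_mat n (x \<circ> Suc)) i) = vandermonde_mat n (x \<circ> Suc)"
    by (intro eq_matI) (auto simp: vandermonde_mat_def)
  finally show ?thesis
    using det_W by (simp add: atLeast0LessThan)
qed

lemma det_vandermonde_mat:
  "Determinant.det (vandermonde_mat n x) = (\<Prod>j<n. \<Prod>i<j. x j - x i)"
proof (induction n arbitrary: x)
  case 0
  show ?case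
    by (simp add: vandermonde_mat_def)
next
  case (Suc n)
  have "(\<Prod>j<Suc n. \<Prod>i<j. x j - x i) = (\<Prod>j<n. (x (Suc j) - x 0) * (\<Prod>i<j. x (Suc j) - x (Suc i)))"
    by (simp add: prod.lessThan_Suc_shift del: prod.lessThan_Suc)
  also have "\<dots> = (\<Prod>i<n. x (Suc i) - x 0) * (\<Prod>j<n. \<Prod>i<j. (x \<circ> Suc) j - (x \<circ> Suc) i)"
    by (simp add: prod.distrib)
  finally show ?case
    by (simp add: det_vandermonde_mat_Suc Suc.IH)
qed

lemma prod_diff_eq_sum_permutes:
  "(\<Prod>j<n. \<Prod>i<j. x j - x i)
   = (\<Sum>p\<in>{p. p permutes {..<n}}. of_int (sign p) * (\<Prod>j<n. (x j :: 'a::comm_ring_1) ^ p j))"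
  unfolding det_vandermonde_mat[symmetric] det_def'[OF vandermonde_mat_carrier]
  by (auto simp: atLeast0LessThan vandermonde_mat_def permutes_in_image intro!: sum.cong prod.cong)

section \<open>The integral as a sum over pairs of permutations\<close>

definition wave_integral :: "int \<Rightarrow> complex" where
  "wave_integral d = (if d = 0 then 1/2 else ((-1) powi d - 1) / (2 * \<i> * pi * of_int d))"

lemma integral_exp_wave:
  "(\<integral>x. indicator {0..pi/2} x * exp (2 * \<i> * of_int d * of_real x) \<partial>lborel) = pi * wave_integral d"
proof -
  let ?g = "\<lambda>x::real. exp (2 * \<i> * of_int d * of_real x) :: complex"
  have "(\<integral>x. indicator {0..pi/2} x * ?g x \<partial>lborel) = (LINT x:{0..pi/2}|lborel. ?g x)"
    unfolding set_lebesgue_integral_def by (intro Bochner_Integration.integral_cong) (auto simp: indicator_def)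
  also have "\<dots> = integral {0..pi/2} ?g"
    by (rule set_borel_integral_eq_integral)
       (auto simp: set_integrable_def intro!: borel_integrable_compact continuous_intros)
  also have "\<dots> = pi * wave_integral d"
  proof (cases "d = 0")
    case True
    then show ?thesis by (simp add: wave_integral_def scaleR_conv_of_real)
  next
    case False
    define G where "G x = exp (2 * \<i> * of_int d * x) / (2 * \<i> * of_int d)" for x :: complex
    have "((\<lambda>x. G (of_real x)) has_vector_derivative ?g x) (at x within {0..pi/2})" for x
    proof -
      have "(G has_field_derivative exp (2 * \<i> * of_int d * of_real x)) (at (of_real x))"
        unfolding G_def using False by (auto intro!: derivative_eq_intros simp: field_simps)
      then show ?thesis
        by (rule has_vector_derivative_real_field)
    qed
    then have "(?g has_integral (G (of_real (pi/2)) - G (of_real 0))) {0..pi/2}"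
      by (intro fundamental_theorem_of_calculus) auto
    moreover have "exp (2 * \<i> * of_int d * of_real (pi/2)) = exp (\<i> * of_real pi) powi d"
      unfolding exp_power_int by (simp add: mult_ac)
    ultimately show ?thesis
      using False by (simp add: integral_unique G_def wave_integral_def field_simps)
  qed
  finally show ?thesis .
qed

lemma sin_diff_squared_exp:
  fixes a b :: real
  shows "(complex_of_real (sin (a - b)))^2 =
    (exp (2 * \<i> * of_real a) - exp (2 * \<i> * of_real b)) *
    (exp (- 2 * \<i> * of_real a) - exp (- 2 * \<i> * of_real b)) / 4"
proof -
  define A B where "A = exp (\<i> * of_real a)" and "B = exp (\<i> * of_real b)"
  have nz: "A \<noteq> 0" "B \<noteq> 0"
    by (simp_all add: A_def B_def)
  have "exp (\<i> * of_real (a - b)) = A / B" "exp (- (\<i> * of_real (a - b))) = B / A"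
    unfolding A_def B_def by (simp_all add: exp_diff[symmetric] algebra_simps)
  then have sin: "complex_of_real (sin (a - b)) = (A / B - B / A) / (2 * \<i>)"
    by (simp add: sin_of_real[symmetric] sin_exp_eq)
  have "exp (- 2 * z) = inverse (exp z ^ 2)" for z :: complex
    using exp_minus[of "2 * z"] by (simp add: exp_double)
  then have exp: "exp (2 * \<i> * of_real a) = A^2" "exp (2 * \<i> * of_real b) = B^2"
    "exp (- 2 * \<i> * of_real a) = inverse (A^2)" "exp (- 2 * \<i> * of_real b) = inverse (B^2)"
    unfolding A_def B_def by (simp_all only: mult.assoc exp_double)
  show ?thesis
    unfolding sin exp using nz by (simp add: field_simps power2_eq_square)
qed

lemma prod_sin_diff_squared:
  fixes q :: "nat \<Rightarrow> real"
  shows "complex_of_real (\<Prod>j<m. \<Prod>k<j. (sin (q j - q k))^2) =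
    perm_pair_sum m (\<lambda>j a b. exp (2 * \<i> * of_real (q j) * (of_nat a - of_nat b))) / 4 ^ (\<Sum>j<m. j)"
proof -
  define z w where "z j = exp (2 * \<i> * of_real (q j))" and "w j = exp (- 2 * \<i> * of_real (q j))" for j
  have "complex_of_real (\<Prod>j<m. \<Prod>k<j. (sin (q j - q k))^2) = (\<Prod>j<m. \<Prod>k<j. (z j - z k) * (w j - w k) / 4)"
    by (simp add: sin_diff_squared_exp z_def w_def)
  also have "\<dots> = (\<Prod>j<m. \<Prod>k<j. z j - z k) * (\<Prod>j<m. \<Prod>k<j. w j - w k) / 4 ^ (\<Sum>j<m. j)"
    by (simp only: prod_dividef prod.distrib prod_constant card_lessThan power_sum)
  also have "(\<Prod>j<m. \<Prod>k<j. z j - z k) * (\<Prod>j<m. \<Prod>k<j. w j - w k) = perm_pair_sum m (\<lambda>j a b. z j ^ a * w j ^ b)"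
    unfolding prod_diff_eq_sum_permutes
    by (rule sum_permutes_mult_sum_permutes[where u = "\<lambda>j a. z j ^ a" and v = "\<lambda>j b. w j ^ b"])
  also have "(\<lambda>j a b. z j ^ a * w j ^ b) = (\<lambda>j a b. exp (2 * \<i> * of_real (q j) * (of_nat a - of_nat b)))"
    by (simp add: z_def w_def fun_eq_iff exp_of_nat_mult[symmetric] exp_add[symmetric] algebra_simps)
  finally show ?thesis .
qed

lemma indicator_PiE_eq_prod:
  assumes "finite I" "p \<in> extensional I"
  shows "indicator (PiE I A) p = (\<Prod>i\<in>I. indicator (A i) (p i) :: real)"
proof (cases "\<forall>i\<in>I. p i \<in> A i")
  case True
  then show ?thesis
    using assms by (simp add: PiE_iff)
next
  case False
  then obtain i where "i \<in> I" "p i \<notin> A i"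
    by blast
  then have "(\<Prod>i\<in>I. indicator (A i) (p i) :: real) = 0"
    using assms(1) by (intro prod_zero bexI[of _ i]) auto
  then show ?thesis
    using False by (simp add: PiE_iff)
qed

lemma of_real_indicator: "of_real (indicator S x) = (indicator S x :: 'a::real_algebra_1)"
  by (cases "x \<in> S") simp_all

lemma integral_perm_pair_sum:
  fixes f :: "nat \<Rightarrow> nat \<Rightarrow> nat \<Rightarrow> 'b \<Rightarrow> 'a::{real_normed_field, banach, second_countable_topology}"
  assumes "sigma_finite_measure M" "\<And>j a b. integrable M (f j a b)"
  shows "(\<integral>p. perm_pair_sum m (\<lambda>j a b. f j a b (p j)) \<partial>PiM {..<m} (\<lambda>_. M))
       = perm_pair_sum m (\<lambda>j a b. integral\<^sup>L M (f j a b))"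
proof -
  interpret product_sigma_finite "\<lambda>_. M"
    using assms(1) by (simp add: product_sigma_finite_def)
  have "integrable (PiM {..<m} (\<lambda>_. M)) (\<lambda>p. \<Prod>j<m. f j (\<sigma> j) (\<tau> j) (p j))" for \<sigma> \<tau> :: "nat \<Rightarrow> nat"
    by (rule product_integrable_prod) (auto simp: assms(2))
  moreover have "(\<integral>p. (\<Prod>j<m. f j (\<sigma> j) (\<tau> j) (p j)) \<partial>PiM {..<m} (\<lambda>_. M))
      = (\<Prod>j<m. integral\<^sup>L M (f j (\<sigma> j) (\<tau> j)))" for \<sigma> \<tau> :: "nat \<Rightarrow> nat"
    by (rule product_integral_prod) (auto simp: assms(2))
  ultimately show ?thesis
    unfolding perm_pair_sum_def by (simp add: integrable_sum)
qed

lemma indicator_mult_prod_sin_diff_squared: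
  fixes e :: "nat \<Rightarrow> int" and p :: "nat \<Rightarrow> real"
  assumes "p \<in> extensional {..<m}"
  shows "complex_of_real (indicator (PiE {..<m} (\<lambda>_. {0..pi/2})) p *
        (\<Prod>j\<in>{..<m}. \<Prod>k\<in>{..<j}. (sin (e j * p j - e k * p k))^2))
    = perm_pair_sum m (\<lambda>j a b. indicator {0..pi/2} (p j) *
        exp (2 * \<i> * of_int (e j * (int a - int b)) * of_real (p j))) / 4 ^ (\<Sum>j<m. j)"
proof -
  have "complex_of_real (indicator (PiE {..<m} (\<lambda>_. {0..pi/2})) p) = (\<Prod>j<m. indicator {0..pi/2} (p j))"
    using indicator_PiE_eq_prod[OF finite_lessThan assms] by (simp add: of_real_indicator)
  then have "complex_of_real (indicator (PiE {..<m} (\<lambda>_. {0..pi/2})) p *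
        (\<Prod>j\<in>{..<m}. \<Prod>k\<in>{..<j}. (sin (e j * p j - e k * p k))^2))
      = (\<Prod>j<m. indicator {0..pi/2} (p j)) *
        perm_pair_sum m (\<lambda>j a b. exp (2 * \<i> * of_real (e j * p j) * (of_nat a - of_nat b))) / 4 ^ (\<Sum>j<m. j)"
    by (simp only: of_real_mult prod_sin_diff_squared times_divide_eq_right)
  also have "(\<lambda>j a b. exp (2 * \<i> * of_real (e j * p j) * (of_nat a - of_nat b)))
      = (\<lambda>j a b. exp (2 * \<i> * of_int (e j * (int a - int b)) * of_real (p j)))"
    by (simp add: fun_eq_iff algebra_simps)
  finally show ?thesis
    by (simp only: prod_mult_perm_pair_sum)
qed

lemma integral_prod_sin_diff_squared:
  fixes e :: "nat \<Rightarrow> int"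
  shows "complex_of_real (\<integral>p. indicator (PiE {..<m} (\<lambda>_. {0..pi/2})) p *
        (\<Prod>j\<in>{..<m}. \<Prod>k\<in>{..<j}. (sin (e j * p j - e k * p k))^2) \<partial>PiM {..<m} (\<lambda>_. lborel))
    = pi ^ m * perm_pair_sum m (\<lambda>j a b. wave_integral (e j * (int a - int b))) / 4 ^ (\<Sum>j<m. j)"
proof -
  let ?M = "PiM {..<m} (\<lambda>_. lborel :: real measure)"
  define f where "f d x = indicator {0..pi/2} x * exp (2 * \<i> * of_int d * of_real x)" for d :: int and x :: real
  have "integrable lborel (\<lambda>x. indicator {0..pi/2} x *\<^sub>R exp (2 * \<i> * of_int d * of_real x))" for d
    by (intro borel_integrable_compact) (auto intro!: continuous_intros)
  then have integrable: "integrable lborel (f d)" for d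
    by (simp add: f_def[abs_def] scaleR_conv_of_real of_real_indicator)
  have integral_f: "integral\<^sup>L lborel (f d) = pi * wave_integral d" for d
    unfolding f_def by (rule integral_exp_wave)
  have "complex_of_real (\<integral>p. indicator (PiE {..<m} (\<lambda>_. {0..pi/2})) p *
        (\<Prod>j\<in>{..<m}. \<Prod>k\<in>{..<j}. (sin (e j * p j - e k * p k))^2) \<partial>?M)
      = (\<integral>p. perm_pair_sum m (\<lambda>j a b. f (e j * (int a - int b)) (p j)) / 4 ^ (\<Sum>j<m. j) \<partial>?M)"
    unfolding integral_complex_of_real[symmetric] f_def
    by (intro Bochner_Integration.integral_cong refl indicator_mult_prod_sin_diff_squared)
       (simp add: space_PiM PiE_def)
  also have "\<dots> = perm_pair_sum m (\<lambda>j a b. pi * wave_integral (e j * (int a - int b))) / 4 ^ (\<Sum>j<m. j)"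
    using integral_perm_pair_sum[where M = lborel and f = "\<lambda>j a b. f (e j * (int a - int b))" and m = m]
    by (simp add: lborel.sigma_finite_measure_axioms integrable integral_f)
  also have "\<dots> = pi ^ m * perm_pair_sum m (\<lambda>j a b. wave_integral (e j * (int a - int b))) / 4 ^ (\<Sum>j<m. j)"
    using prod_mult_perm_pair_sum[of "\<lambda>_. complex_of_real pi" m] by simp
  finally show ?thesis .
qed

section \<open>The determinant formula\<close>

lemma double_sum_lessThan: "2 * (\<Sum>j<m. j) + m = (m::nat)^2"
  by (induction m) (simp_all add: power2_eq_square algebra_simps)

lemma F_eq_perm_pair_sum:
  "complex_of_real (F m s) = perm_pair_sum m (\<lambda>j a b.
      if j < s then wave_integral (int b - int a) else wave_integral (int a - int b)) / (fact s * fact (m - s))"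
proof -
  define N where "N = (\<Sum>j<m. j)"
  have "m^2 = 2 * N + m"
    unfolding N_def by (simp add: double_sum_lessThan)
  then have exponent: "real (m^2) - real m = real (2 * N)"
    by simp
  have power: "2 powr (real (m^2) - real m) = 4 ^ N"
    unfolding exponent by (subst powr_realpow) (simp_all add: power_mult)
  have eps: "eps s = (\<lambda>j. real_of_int (if j < s then -1 else 1))"
    by (auto simp: eps_def)
  have pattern: "(\<lambda>j a b. wave_integral ((if j < s then -1 else 1) * (int a - int b)))
      = (\<lambda>j a b. if j < s then wave_integral (int b - int a) else wave_integral (int a - int b))"
    by (auto simp: fun_eq_iff)
  note integral = integral_prod_sin_diff_squared[where e = "\<lambda>j. if j < s then -1 else 1" and m = m,
      unfolded pattern, folded N_def]
  show ?thesis
    unfolding F_def eps of_real_mult of_real_divide integral power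
    by (simp add: field_simps)
qed

lemma wave_integral_minus_add:
  assumes "d \<noteq> 0"
  shows "wave_integral (- d) + of_real E * wave_integral d
    = of_real ((1 - E) * (1 - (-1) powi d)) / (2 * \<i> * pi * of_int d)"
proof -
  define u D where "u = (-1 :: complex) powi d" and "D = 2 * \<i> * pi * of_int d"
  have "D \<noteq> 0"
    using assms by (simp add: D_def)
  have wave: "wave_integral (- d) = (1 - u) / D" "wave_integral d = (u - 1) / D"
    using assms by (simp_all add: wave_integral_def power_int_minus_one_minus u_def D_def divide_simps)
  have "wave_integral (- d) + of_real E * wave_integral d = (1 - of_real E) * (1 - u) / D"
    unfolding wave using \<open>D \<noteq> 0\<close> by (simp add: field_simps)
  then show ?thesis
    by (simp add: u_def D_def)
qed

lemma Tmat_eq_mat_wave_integral: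
  fixes \<beta> :: real
  shows "Tmat m \<beta> = Matrix.mat m m (\<lambda>(k, n).
    wave_integral (int k - int n) + of_real (exp \<beta>) * wave_integral (int n - int k))"
  unfolding Tmat_def
proof (rule cong_mat)
  fix k n
  show "(case (k, n) of (k, n) \<Rightarrow>
      if k = n then complex_of_real ((exp \<beta> + 1) / 2)
      else complex_of_real ((1 - exp \<beta>) * (1 - (-1) powi (int n - int k))) / (2 * \<i> * pi * of_int (int n - int k)))
    = (case (k, n) of (k, n) \<Rightarrow>
      wave_integral (int k - int n) + of_real (exp \<beta>) * wave_integral (int n - int k))"
  proof (cases "k = n")
    case True
    then show ?thesis
      by (simp add: wave_integral_def field_simps)
  next
    case False
    then show ?thesis
      using wave_integral_minus_add[of "int n - int k" "exp \<beta>"] by simp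
  qed
qed simp_all

theorem mainTheorem7:
  fixes m :: nat and \<beta> :: real
  assumes "m \<ge> 1"
  shows "complex_of_real (\<Sum>s\<in>{0..m}. exp (real s * \<beta>) * F m s) = Determinant.det (Tmat m \<beta>)"
proof -
  define E where "E = complex_of_real (exp \<beta>)"
  define P where "P S = perm_pair_sum m (\<lambda>j a b.
      if j \<in> S then wave_integral (int b - int a) else wave_integral (int a - int b))" for S
  have P_card: "E ^ card S * P S = E ^ card S * P {..<card S}" if "S \<subseteq> {..<m}" for S
    unfolding P_def
    by (simp only: perm_pair_sum_subset_pattern[OF that, where f = "\<lambda>a b. wave_integral (int b - int a)"
          and g = "\<lambda>a b. wave_integral (int a - int b)"] lessThan_iff)
  have "complex_of_real (\<Sum>s\<in>{0..m}. exp (real s * \<beta>) * F m s)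
      = (\<Sum>s=0..m. E ^ s * P {..<s} / (fact s * fact (m - s)))"
    by (simp add: F_eq_perm_pair_sum P_def E_def exp_of_nat_mult)
  also have "\<dots> = (\<Sum>s=0..m. of_nat (m choose s) * (E ^ s * P {..<s})) / fact m"
    by (simp add: binomial_fact sum_divide_distrib)
  also have "\<dots> = (\<Sum>S\<in>Pow {..<m}. E ^ card S * P S) / fact m"
    using sum_Pow_by_card[of "{..<m}" "\<lambda>S. E ^ card S * P S" "\<lambda>s. E ^ s * P {..<s}", OF finite_lessThan P_card]
    by simp
  also have "\<dots> = perm_pair_sum m (\<lambda>_ a b. wave_integral (int a - int b) + E * wave_integral (int b - int a)) / fact m"
    unfolding P_def perm_pair_sum_multilinear ..
  also have "\<dots> = Determinant.det (Tmat m \<beta>)"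
    by (simp add: perm_pair_sum_const Tmat_eq_mat_wave_integral E_def)
  finally show ?thesis .
qed

end
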